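(* For every integer $N\ge 2$, the set $W_N\subset\mathbb R^{N-1}$ is homeomorphic to the closed unit ball $B^{N-1}=\{\mathbf x\in\mathbb R^{N-1}:\|\mathbf x\|\le 1\}$.
   Context: Let $N\ge 2$ be an integer and $\mathbb T=\{z\in\mathbb C:|z|=1\}$. For $\mathbf a=(a_1,\dots,a_{N-1})\in\mathbb R^{N-1}$ define $\mathbf c=(c_1,\dots,c_{N-1})\in\mathbb C^{N-1}$ by $c_j=\frac{\sqrt2}{2}(a_j+i\,a_{N-j})$ for $1\le j<N/2$, $c_{N/2}=a_{N/2}$ (only when $N$ is even), and $c_j=\frac{\sqrt2}{2}(a_{N-j}-i\,a_j)$ for $N/2<j\le N-1$ (so $c_{N-j}=\overline{c_j}$ and $\|\mathbf c\|=\|\mathbf a\|$). Associate to $\mathbf a$ the monic polynomial $\mathbf a(x)=x^N+\sum_{n=1}^{N-1}c_nx^{N-n}+1$. Define $W_N=\{\mathbf a\in\mathbb R^{N-1}:\text{all roots of }\mathbf a(x)\text{ lie in }\mathbb T\}$, with the subspace topology and Euclidean metric from $\mathbb R^{N-1}$. *)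

theory Defs
  imports "HOL-Analysis.Analysis"
begin

definition cvec :: "nat \<Rightarrow> (nat \<Rightarrow> real) \<Rightarrow> nat \<Rightarrow> complex" where
  "cvec N a j =
     (if 2 * j < N then complex_of_real (sqrt 2 / 2) * (complex_of_real (a j) + \<i> * complex_of_real (a (N - j)))
      else if 2 * j = N then complex_of_real (a j)
      else complex_of_real (sqrt 2 / 2) * (complex_of_real (a (N - j)) - \<i> * complex_of_real (a j)))"

definition apoly :: "nat \<Rightarrow> (nat \<Rightarrow> real) \<Rightarrow> complex \<Rightarrow> complex" where
  "apoly N a x = x ^ N + (\<Sum>n = 1..N - 1. cvec N a n * x ^ (N - n)) + 1"

text \<open>W_N inside R^(N-1), realised as real^'n where the coordinate with index j in {1..N-1}
  is the component at e j, for a fixed bijection e from {1..N-1} onto the index type.\<close>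
definition W :: "nat \<Rightarrow> (nat \<Rightarrow> 'n::finite) \<Rightarrow> (real ^ 'n) set" where
  "W N e = {x. \<forall>z. apoly N (\<lambda>j. x $ e j) z = 0 \<longrightarrow> cmod z = 1}"

end

theory Submission
  imports Defs "HOL-Computational_Algebra.Fundamental_Theorem_Algebra"
begin

text \<open>Points of \<open>\<real>\<^sup>N\<^sup>-\<^sup>1\<close> correspond to the polynomials \<open>p\<close> that are monic of degree \<open>N\<close>,
  have constant term 1 and are self-inversive (\<open>reflect_poly p = map_poly cnj p\<close>); those in
  \<open>W N\<close> to the products of \<open>[:-z, 1:]\<close> over multisets of \<open>N\<close> unimodular \<open>z\<close> with
  \<open>\<Prod>(-z) = 1\<close>. Lifting the roots to \<open>cis (2 * pi * w k)\<close> with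
  \<open>w 0 \<le> \<dots> \<le> w (N - 1) \<le> w 0 + 1\<close> and \<open>\<Sum>k<N. w k = N / 2\<close> is possible in exactly one
  way, and the gaps \<open>w j - w (j - 1)\<close> of such lifts range over the standard simplex. The
  resulting map from the simplex onto \<open>W N\<close> is a continuous bijection from a compact set, hence a
  homeomorphism, and the simplex, being a compact convex body, is homeomorphic to the ball.\<close>

definition poly_of_roots :: "'a::comm_ring_1 multiset \<Rightarrow> 'a poly" where
  "poly_of_roots M = (\<Prod>z\<in>#M. [:- z, 1:])"

lemma poly_of_roots_empty [simp]: "poly_of_roots {#} = 1"
  by (simp add: poly_of_roots_def)

lemma poly_of_roots_add_mset [simp]:
  "poly_of_roots (add_mset z M) = [:- z, 1:] * poly_of_roots M"
  by (simp add: poly_of_roots_def)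

lemma poly_of_roots_nonzero [simp]: "poly_of_roots (M :: 'a::idom multiset) \<noteq> 0"
  by (induction M) (simp_all del: mult_pCons_left)

lemma degree_poly_of_roots [simp]: "degree (poly_of_roots (M :: 'a::idom multiset)) = size M"
  by (induction M) (simp_all add: degree_mult_eq del: mult_pCons_left)

lemma lead_coeff_poly_of_roots [simp]: "lead_coeff (poly_of_roots (M :: 'a::idom multiset)) = 1"
  by (induction M) (simp_all add: lead_coeff_mult del: mult_pCons_left)

lemma coeff_0_poly_of_roots: "coeff (poly_of_roots M) 0 = (\<Prod>z\<in>#M. - z)"
  by (induction M) (auto simp: coeff_mult_0)

lemma proots_poly_of_roots [simp]: "proots (poly_of_roots (M :: 'a::idom multiset)) = M"
  using proots_linear_factor[of "- z" for z]
  by (induction M) (simp_all add: proots_mult del: mult_pCons_left)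

lemma poly_poly_of_roots_eq_0_iff:
  "poly (poly_of_roots M) z = 0 \<longleftrightarrow> z \<in># (M :: 'a::idom multiset)"
  by (induction M) auto

lemma poly_of_roots_proots:
  assumes "lead_coeff p = 1"
  shows "poly_of_roots (proots p) = (p :: complex poly)"
  using complex_poly_decompose_multiset[of p] assms by (simp add: poly_of_roots_def)

lemma map_poly_cnj_mult: "map_poly cnj (p * q) = map_poly cnj p * map_poly cnj q"
  by (rule poly_eq_poly_eq_iff[THEN iffD1]) (simp add: fun_eq_iff)

text \<open>Since \<open>z \<cdot> cnj z = 1\<close>, each factor satisfies
  \<open>reflect_poly [:-z, 1:] = [:1, -z:] = -z \<cdot> [:-cnj z, 1:]\<close>.\<close>
lemma reflect_poly_of_roots_unimodular:
  assumes "\<forall>z\<in>#M. cmod z = 1"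
  shows "reflect_poly (poly_of_roots M) = smult (\<Prod>z\<in>#M. - z) (map_poly cnj (poly_of_roots M))"
  using assms
proof (induction M)
  case (add z M)
  then have "z \<noteq> 0" "z * cnj z = 1"
    by (auto simp: complex_norm_square[symmetric])
  then have "reflect_poly [:- z, 1:] = smult (- z) (map_poly cnj [:- z, 1:])"
    by (simp add: reflect_poly_pCons map_poly_pCons algebra_simps)
  with add show ?case
    unfolding poly_of_roots_add_mset reflect_poly_mult map_poly_cnj_mult by (simp add: mult_ac)
qed simp

lemma continuous_on_coeff_prod_linear:
  fixes f :: "'i \<Rightarrow> 'a::topological_space \<Rightarrow> 'b::real_normed_field"
  assumes "finite A" "\<And>i. i \<in> A \<Longrightarrow> continuous_on S (f i)"
  shows "continuous_on S (\<lambda>x. coeff (\<Prod>i\<in>A. [:- f i x, 1:]) n)"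
  using assms
proof (induction A arbitrary: n rule: finite_induct)
  case (insert i A)
  have "coeff ([:- c, 1:] * p) n = (case n of 0 \<Rightarrow> 0 | Suc m \<Rightarrow> coeff p m) - c * coeff p n"
    for c and p :: "'b poly"
    by (simp add: algebra_simps coeff_pCons)
  with insert show ?case
    by (cases n) (auto intro!: continuous_intros)
qed (simp add: coeff_1)

definition avec :: "nat \<Rightarrow> (nat \<Rightarrow> complex) \<Rightarrow> nat \<Rightarrow> real" where
  "avec N c j =
     (if 2 * j < N then sqrt 2 * Re (c j)
      else if 2 * j = N then Re (c j)
      else sqrt 2 * Im (c (N - j)))"

lemma cvec_cong:
  assumes "\<forall>j\<in>{1..N - 1}. a j = b j" "n \<in> {1..N - 1}"
  shows "cvec N a n = cvec N b n"
proof -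
  have "N - n \<in> {1..N - 1}"
    using assms(2) by auto
  with assms show ?thesis
    by (simp add: cvec_def)
qed

lemma avec_cong:
  assumes "\<forall>n\<in>{1..N - 1}. c n = c' n" "j \<in> {1..N - 1}"
  shows "avec N c j = avec N c' j"
proof -
  have "N - j \<in> {1..N - 1}"
    using assms(2) by auto
  with assms show ?thesis
    by (simp add: avec_def)
qed

lemma avec_cvec:
  assumes "j \<in> {1..N - 1}"
  shows "avec N (cvec N a) j = a j"
  using assms by (auto simp: avec_def cvec_def)

lemma cvec_avec:
  assumes "\<forall>n\<in>{1..N - 1}. c (N - n) = cnj (c n)" "n \<in> {1..N - 1}"
  shows "cvec N (avec N c) n = c n"
proof -
  have mirror: "c (N - n) = cnj (c n)" "N - (N - n) = n"
    using assms by auto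
  have sqrt2: "sqrt 2 / 2 * (sqrt 2 * x) = x" for x :: real
    by simp
  consider "2 * n < N" | "2 * n = N" | "2 * n > N"
    by linarith
  then show ?thesis
  proof cases
    case 1
    then have "avec N c n = sqrt 2 * Re (c n)" "avec N c (N - n) = sqrt 2 * Im (c n)"
      using mirror(2) by (auto simp: avec_def)
    with 1 show ?thesis
      by (simp add: cvec_def complex_eq_iff sqrt2)
  next
    case 2
    then have "N - n = n"
      by simp
    then have "c n = cnj (c n)"
      using mirror(1) by simp
    then have "Im (c n) = 0"
      by (metis complex_cnj_cancel_iff complex_cnj_zero_iff Reals_cnj_iff complex_is_Real_iff)
    with 2 show ?thesis
      by (simp add: avec_def cvec_def complex_eq_iff)
  next
    case 3
    then have "avec N c n = sqrt 2 * Im (c (N - n))" "avec N c (N - n) = sqrt 2 * Re (c (N - n))"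
      using assms(2) by (auto simp: avec_def)
    with 3 have "cvec N (avec N c) n = cnj (c (N - n))"
      by (simp add: cvec_def complex_eq_iff sqrt2)
    with mirror(1) show ?thesis
      by simp
  qed
qed

definition apoly_poly :: "nat \<Rightarrow> (nat \<Rightarrow> real) \<Rightarrow> complex poly" where
  "apoly_poly N a = monom 1 N + (\<Sum>n = 1..N - 1. monom (cvec N a n) (N - n)) + 1"

lemma poly_apoly_poly: "poly (apoly_poly N a) = apoly N a"
  by (simp add: fun_eq_iff apoly_poly_def apoly_def poly_sum poly_monom)

lemma coeff_apoly_poly:
  assumes "N \<ge> 1"
  shows "coeff (apoly_poly N a) k =
    (if k = 0 \<or> k = N then 1 else if k < N then cvec N a (N - k) else 0)"
proof -
  have "(\<Sum>n = 1..N - 1. coeff (monom (cvec N a n) (N - n)) k) =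
      (\<Sum>n = 1..N - 1. if n = N - k then cvec N a n else 0)"
    by (rule sum.cong) (auto simp: coeff_monom)
  also have "\<dots> = (if 0 < k \<and> k < N then cvec N a (N - k) else 0)"
    by (subst sum.delta) auto
  finally show ?thesis
    using assms by (auto simp: apoly_poly_def coeff_sum coeff_monom)
qed

lemma degree_apoly_poly:
  assumes "N \<ge> 1"
  shows "degree (apoly_poly N a) = N"
proof (rule antisym)
  show "degree (apoly_poly N a) \<le> N"
    by (rule degree_le) (use assms in \<open>simp add: coeff_apoly_poly\<close>)
  show "N \<le> degree (apoly_poly N a)"
    by (rule le_degree) (use assms in \<open>simp add: coeff_apoly_poly\<close>)
qed

lemma apoly_poly_cong:
  assumes "\<forall>j\<in>{1..N - 1}. a j = b j"
  shows "apoly_poly N a = apoly_poly N b"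
proof -
  have "(\<Sum>n = 1..N - 1. monom (cvec N a n) (N - n)) =
      (\<Sum>n = 1..N - 1. monom (cvec N b n) (N - n))"
    using cvec_cong[OF assms] by (intro sum.cong) auto
  then show ?thesis
    by (simp add: apoly_poly_def)
qed

definition poly_coords :: "nat \<Rightarrow> complex poly \<Rightarrow> nat \<Rightarrow> real" where
  "poly_coords N p = avec N (\<lambda>n. coeff p (N - n))"

lemma poly_coords_apoly_poly:
  assumes "N \<ge> 1" "j \<in> {1..N - 1}"
  shows "poly_coords N (apoly_poly N a) j = a j"
proof -
  have "coeff (apoly_poly N a) (N - n) = cvec N a n" if "n \<in> {1..N - 1}" for n
    using assms(1) that by (auto simp: coeff_apoly_poly)
  then have "poly_coords N (apoly_poly N a) j = avec N (cvec N a) j"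
    unfolding poly_coords_def using assms(2) by (intro avec_cong) auto
  with assms(2) show ?thesis
    by (simp add: avec_cvec)
qed

lemma apoly_poly_poly_coords:
  assumes "N \<ge> 1" "degree p = N" "lead_coeff p = 1"
    and self_inversive: "reflect_poly p = map_poly cnj p"
  shows "apoly_poly N (poly_coords N p) = p"
proof (rule poly_eqI)
  fix k
  have mirror: "coeff p (N - n) = cnj (coeff p n)" if "n \<le> N" for n
    using arg_cong[OF self_inversive, of "\<lambda>q. coeff q n"] that assms(2)
    by (simp add: coeff_reflect_poly coeff_map_poly)
  have "\<forall>n\<in>{1..N - 1}. coeff p (N - (N - n)) = cnj (coeff p (N - n))"
    using mirror by auto
  then have "cvec N (poly_coords N p) (N - k) = coeff p (N - (N - k))" if "0 < k" "k < N"
    unfolding poly_coords_def using that by (intro cvec_avec) auto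
  moreover have "coeff p 0 = 1"
    using mirror[of N] assms(2,3) by simp
  ultimately show "coeff (apoly_poly N (poly_coords N p)) k = coeff p k"
    using assms by (auto simp: coeff_apoly_poly coeff_eq_0)
qed

definition turns :: "complex \<Rightarrow> real" where
  "turns z = Arg z / (2 * pi)"

lemma cis_turns:
  assumes "cmod z = 1"
  shows "cis (2 * pi * turns z) = z"
proof -
  have "z \<noteq> 0"
    using assms by auto
  with assms show ?thesis
    by (simp add: turns_def cis_Arg sgn_div_norm)
qed

lemma turns_bounds: "- 1 / 2 < turns z \<and> turns z \<le> 1 / 2"
  using Arg_bounded[of z] by (auto simp: turns_def field_simps)

lemma cis_two_pi_eqD:
  assumes "cis (2 * pi * s) = cis (2 * pi * t)"
  obtains n :: int where "s = t + n"
proof -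
  have "cis (2 * pi * (s - t)) = 1"
    using assms by (simp add: right_diff_distrib cis_divide[symmetric])
  then obtain n :: int where "2 * pi * (s - t) = of_int n * 2 * pi"
    by (auto simp: complex_eq_iff cos_one_2pi_int)
  then have "pi * (2 * s) = pi * (2 * (t + n))"
    by (simp add: algebra_simps)
  then have "s = t + n"
    by simp
  then show thesis
    by (rule that)
qed

lemma floor_diff_add_turns_cis:
  "of_int \<lfloor>y - turns (cis (2 * pi * t))\<rfloor> + turns (cis (2 * pi * t)) = of_int \<lfloor>y - t\<rfloor> + t"
proof -
  obtain n :: int where n: "turns (cis (2 * pi * t)) = t + n"
    using cis_turns[of "cis (2 * pi * t)"] by (auto elim: cis_two_pi_eqD)
  have "\<lfloor>y - (t + of_int n)\<rfloor> = \<lfloor>y - t\<rfloor> - n"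
    by (metis diff_diff_eq floor_diff_of_int)
  then show ?thesis
    unfolding n by simp
qed

lemma prod_cis: "(\<Prod>k\<in>A. cis (f k)) = cis (\<Sum>k\<in>A. f k)"
  by (induction A rule: infinite_finite_induct) (simp_all add: cis_mult)

definition angle_window :: "nat \<Rightarrow> (nat \<Rightarrow> real) \<Rightarrow> bool" where
  "angle_window N w \<longleftrightarrow> mono_on {..<N} w \<and> w (N - 1) \<le> w 0 + 1"

definition root_mset :: "nat \<Rightarrow> (nat \<Rightarrow> real) \<Rightarrow> complex multiset" where
  "root_mset N w = image_mset (\<lambda>k. cis (2 * pi * w k)) (mset_set {..<N})"

lemma angle_window_mono: "angle_window N w \<Longrightarrow> i \<le> j \<Longrightarrow> j < N \<Longrightarrow> w i \<le> w j"
  unfolding angle_window_def by (auto intro: mono_onD)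

lemma angle_window_spread: "angle_window N w \<Longrightarrow> i < N \<Longrightarrow> j < N \<Longrightarrow> w j \<le> w i + 1"
  using angle_window_mono[of N w j "N - 1"] angle_window_mono[of N w 0 i]
  unfolding angle_window_def by fastforce

lemma size_root_mset [simp]: "size (root_mset N w) = N"
  by (simp add: root_mset_def)

lemma unimodular_root_mset: "z \<in># root_mset N w \<Longrightarrow> cmod z = 1"
  by (auto simp: root_mset_def)

lemma root_mset_cong: "(\<And>k. k < N \<Longrightarrow> w k = w' k) \<Longrightarrow> root_mset N w = root_mset N w'"
  unfolding root_mset_def by (intro image_mset_cong) auto

lemma root_mset_Suc: "root_mset (Suc N) w = add_mset (cis (2 * pi * w N)) (root_mset N w)"
  by (simp add: root_mset_def lessThan_Suc)

lemma root_mset_Suc_shift: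
  "root_mset (Suc N) w = add_mset (cis (2 * pi * w 0)) (root_mset N (\<lambda>k. w (Suc k)))"
proof -
  have "mset_set (Suc ` {..<N}) = image_mset Suc (mset_set {..<N})"
    by (simp add: image_mset_mset_set)
  then show ?thesis
    by (simp add: root_mset_def lessThan_Suc_eq_insert_0 image_mset.compositionality comp_def)
qed

lemma sum_mset_image_root_mset:
  "sum_mset (image_mset h (root_mset N w)) = (\<Sum>k<N. h (cis (2 * pi * w k)))"
  by (simp add: root_mset_def sum_unfold_sum_mset image_mset.compositionality comp_def)

lemma prod_uminus_root_mset:
  "(\<Prod>z\<in>#root_mset N w. - z) = cis (2 * pi * ((\<Sum>k<N. w k) - N / 2))"
proof -
  have "(\<Prod>z\<in>#root_mset N w. - z) = (\<Prod>k<N. cis (2 * pi * w k - pi))"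
    by (simp add: root_mset_def prod_unfold_prod_mset image_mset.compositionality comp_def
        minus_cis')
  also have "\<dots> = cis (2 * pi * ((\<Sum>k<N. w k) - N / 2))"
    by (simp add: prod_cis sum_subtractf sum_distrib_left algebra_simps)
  finally show ?thesis .
qed

lemma poly_of_roots_root_mset:
  "poly_of_roots (root_mset N w) = (\<Prod>k<N. [:- cis (2 * pi * w k), 1:])"
  by (simp add: poly_of_roots_def root_mset_def prod_unfold_prod_mset image_mset.compositionality
      comp_def)

lemma sum_floor_angle_window_lower:
  assumes "angle_window N w" "k < N"
  shows "- int (N - 1 - k) \<le> (\<Sum>j<N. \<lfloor>w k - w j\<rfloor>)"
proof -
  have "(\<Sum>j<N. if j \<le> k then 0 else - 1) \<le> (\<Sum>j<N. \<lfloor>w k - w j\<rfloor>)"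
  proof (rule sum_mono)
    fix j assume "j \<in> {..<N}"
    then have "w j \<le> w k + 1" "j \<le> k \<Longrightarrow> w j \<le> w k"
      using assms angle_window_spread angle_window_mono by auto
    then show "(if j \<le> k then 0 else - 1) \<le> \<lfloor>w k - w j\<rfloor>"
      by (auto simp: le_floor_iff)
  qed
  also have "(\<Sum>j<N. if j \<le> k then 0 else - 1) = (\<Sum>j\<in>{k<..<N}. - 1 :: int)"
    by (rule sum.mono_neutral_cong_right) auto
  finally show ?thesis
    by simp
qed

lemma sum_floor_angle_window_upper:
  assumes "angle_window N w" "k < N" "y < w k"
  shows "(\<Sum>j<N. \<lfloor>y - w j\<rfloor>) \<le> - int (N - k)"
proof -
  have "(\<Sum>j<N. \<lfloor>y - w j\<rfloor>) \<le> (\<Sum>j<N. if j < k then 0 else - 1)"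
  proof (rule sum_mono)
    fix j assume "j \<in> {..<N}"
    then have "w k \<le> w j + 1" "k \<le> j \<Longrightarrow> w k \<le> w j"
      using assms angle_window_spread angle_window_mono by auto
    then show "\<lfloor>y - w j\<rfloor> \<le> (if j < k then 0 else - 1)"
      using assms(3) by (auto simp: floor_le_iff)
  qed
  also have "(\<Sum>j<N. if j < k then 0 else - 1) = (\<Sum>j\<in>{k..<N}. - 1 :: int)"
    by (rule sum.mono_neutral_cong_right) auto
  finally show ?thesis
    by simp
qed

text \<open>Since \<open>\<lfloor>y - t\<rfloor> + t\<close> is 1-periodic in \<open>t\<close>, it is a function of \<open>cis (2 * pi * t)\<close>.\<close>
lemma sum_floor_eq_if_root_mset_eq:
  assumes "(\<Sum>k<N. w k) = (\<Sum>k<N. w' k)" "root_mset N w = root_mset N w'"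
  shows "(\<Sum>j<N. \<lfloor>y - w j\<rfloor>) = (\<Sum>j<N. \<lfloor>y - w' j\<rfloor>)"
proof -
  define h where "h z = of_int \<lfloor>y - turns z\<rfloor> + turns z" for z
  have "sum_mset (image_mset h (root_mset N v)) = of_int (\<Sum>j<N. \<lfloor>y - v j\<rfloor>) + (\<Sum>k<N. v k)"
    for v
    by (simp add: sum_mset_image_root_mset h_def floor_diff_add_turns_cis sum.distrib)
  from this[of w] this[of w'] assms
  have "real_of_int (\<Sum>j<N. \<lfloor>y - w j\<rfloor>) = real_of_int (\<Sum>j<N. \<lfloor>y - w' j\<rfloor>)"
    by (metis add_right_cancel)
  then show ?thesis
    by (rule of_int_eq_iff[THEN iffD1])
qed

lemma angle_window_unique:
  assumes "angle_window N w" "angle_window N w'"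
    and "(\<Sum>k<N. w k) = (\<Sum>k<N. w' k)" "root_mset N w = root_mset N w'"
    and "k < N"
  shows "w k = w' k"
proof -
  have "w k \<le> w' k"
    if "angle_window N w" "angle_window N w'"
      "(\<Sum>k<N. w k) = (\<Sum>k<N. w' k)" "root_mset N w = root_mset N w'"
    for w w'
  proof (rule ccontr)
    assume "\<not> w k \<le> w' k"
    then have "(\<Sum>j<N. \<lfloor>w' k - w j\<rfloor>) \<le> - int (N - k)"
      using sum_floor_angle_window_upper that(1) assms(5) by simp
    moreover have "- int (N - 1 - k) \<le> (\<Sum>j<N. \<lfloor>w' k - w' j\<rfloor>)"
      using sum_floor_angle_window_lower that(2) assms(5) .
    moreover have "(\<Sum>j<N. \<lfloor>w' k - w j\<rfloor>) = (\<Sum>j<N. \<lfloor>w' k - w' j\<rfloor>)"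
      using sum_floor_eq_if_root_mset_eq that(3,4) .
    ultimately show False
      using assms(5) by linarith
  qed
  from this[of w w'] this[of w' w] assms show ?thesis
    by fastforce
qed

definition rotate_window :: "nat \<Rightarrow> (nat \<Rightarrow> real) \<Rightarrow> nat \<Rightarrow> real" where
  "rotate_window N w k = (if Suc k < N then w (Suc k) else w 0 + 1)"

lemma angle_window_rotate_window:
  assumes "angle_window N w"
  shows "angle_window N (rotate_window N w)"
  unfolding angle_window_def
proof
  show "mono_on {..<N} (rotate_window N w)"
  proof (rule mono_onI)
    fix i j assume "i \<in> {..<N}" "j \<in> {..<N}" "i \<le> j"
    then show "rotate_window N w i \<le> rotate_window N w j"
      using assms angle_window_mono[of N w] angle_window_spread[of N w 0]
      by (auto simp: rotate_window_def)
  qed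
  show "rotate_window N w (N - 1) \<le> rotate_window N w 0 + 1"
    using assms angle_window_mono[of N w 0 1] by (auto simp: rotate_window_def)
qed

lemma sum_rotate_window:
  assumes "N \<ge> 1"
  shows "(\<Sum>k<N. rotate_window N w k) = (\<Sum>k<N. w k) + 1"
proof -
  obtain M where N: "N = Suc M"
    using assms by (cases N) auto
  have init: "(\<Sum>k<M. rotate_window N w k) = (\<Sum>k<M. w (Suc k))"
    unfolding N rotate_window_def by (intro sum.cong) auto
  have "(\<Sum>k<N. rotate_window N w k) = (\<Sum>k<M. rotate_window N w k) + rotate_window N w M"
    by (simp only: N sum.lessThan_Suc)
  also have "\<dots> = w 0 + (\<Sum>k<M. w (Suc k)) + 1"
    unfolding init by (simp add: N rotate_window_def)
  also have "\<dots> = (\<Sum>k<N. w k) + 1"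
    by (simp only: N sum.lessThan_Suc_shift)
  finally show ?thesis .
qed

lemma root_mset_rotate_window:
  assumes "N \<ge> 1"
  shows "root_mset N (rotate_window N w) = root_mset N w"
proof -
  obtain M where N: "N = Suc M"
    using assms by (cases N) auto
  have init: "root_mset M (rotate_window N w) = root_mset M (\<lambda>k. w (Suc k))"
    unfolding N rotate_window_def by (intro root_mset_cong) auto
  have "root_mset N (rotate_window N w) =
      add_mset (cis (2 * pi * rotate_window N w M)) (root_mset M (rotate_window N w))"
    by (simp only: N root_mset_Suc)
  also have "\<dots> = add_mset (cis (2 * pi * w 0)) (root_mset M (\<lambda>k. w (Suc k)))"
    unfolding init by (simp add: N rotate_window_def distrib_left cis_mult[symmetric])
  also have "\<dots> = root_mset N w"
    by (simp only: N root_mset_Suc_shift)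
  finally show ?thesis .
qed

lemma angle_window_add_turns:
  assumes "N \<ge> 1" "angle_window N w"
  shows "\<exists>w'. angle_window N w' \<and> (\<Sum>k<N. w' k) = (\<Sum>k<N. w k) + real m \<and>
    root_mset N w' = root_mset N w"
proof (induction m)
  case (Suc m)
  then obtain w' where "angle_window N w'" "(\<Sum>k<N. w' k) = (\<Sum>k<N. w k) + real m"
    "root_mset N w' = root_mset N w"
    by blast
  with assms(1) show ?case
    by (intro exI[of _ "rotate_window N w'"])
      (simp add: angle_window_rotate_window sum_rotate_window root_mset_rotate_window)
qed (use assms in auto)

text \<open>Sorting the turns of the roots gives a window; its sum is congruent to \<open>N / 2\<close>
  modulo 1 and at most \<open>N / 2\<close>, so finitely many rotations normalise it.\<close>
lemma angle_window_exists:
  assumes "N \<ge> 1" "size M = N" "\<forall>z\<in>#M. cmod z = 1" "(\<Prod>z\<in>#M. - z) = 1"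
  shows "\<exists>w. angle_window N w \<and> (\<Sum>k<N. w k) = N / 2 \<and> root_mset N w = M"
proof -
  define L where "L = sorted_list_of_multiset (image_mset turns M)"
  have L: "mset L = image_mset turns M" "sorted L" "length L = N"
    using assms(2) by (simp_all add: L_def flip: size_mset)
  have bounds: "- 1 / 2 < L ! k \<and> L ! k \<le> 1 / 2" if "k < N" for k
  proof -
    have "L ! k \<in> turns ` set_mset M"
      using that L by (metis nth_mem set_image_mset set_mset_mset)
    then show ?thesis
      using turns_bounds by auto
  qed
  have "mset L = image_mset (nth L) (mset_set {..<N})"
    by (metis L(3) map_nth mset_map mset_set_upto_eq_mset_upto)
  then have "root_mset N (nth L) = image_mset (\<lambda>t. cis (2 * pi * t)) (mset L)"
    by (simp add: root_mset_def image_mset.compositionality comp_def)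
  also have "\<dots> = M"
    using assms(3) L(1)
    by (simp add: image_mset.compositionality comp_def cis_turns multiset.map_ident_strong)
  finally have root: "root_mset N (nth L) = M" .
  have window: "angle_window N (nth L)"
    unfolding angle_window_def
  proof
    show "mono_on {..<N} (nth L)"
      using L by (auto intro!: mono_onI sorted_nth_mono)
    show "L ! (N - 1) \<le> L ! 0 + 1"
      using bounds[of "N - 1"] bounds[of 0] assms(1) by linarith
  qed
  have "cis (2 * pi * ((\<Sum>k<N. L ! k) - N / 2)) = cis (2 * pi * 0)"
    using assms(4) root prod_uminus_root_mset[of N "nth L"] by simp
  then obtain n :: int where n: "(\<Sum>k<N. L ! k) - N / 2 = 0 + real_of_int n"
    by (rule cis_two_pi_eqD)
  have "(\<Sum>k<N. L ! k) \<le> (\<Sum>k<N. 1 / 2)"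
    using bounds by (intro sum_mono) auto
  then have "n \<le> 0"
    using n by simp
  then obtain w where "angle_window N w" "(\<Sum>k<N. w k) = (\<Sum>k<N. L ! k) + real (nat (- n))"
    "root_mset N w = root_mset N (nth L)"
    using angle_window_add_turns[OF assms(1) window] by blast
  with n \<open>n \<le> 0\<close> root show ?thesis
    by auto
qed

definition simplex_point :: "nat \<Rightarrow> (nat \<Rightarrow> real) \<Rightarrow> bool" where
  "simplex_point N d \<longleftrightarrow> (\<forall>j\<in>{1..N - 1}. 0 \<le> d j) \<and> (\<Sum>j = 1..N - 1. d j) \<le> 1"

text \<open>The window with gaps \<open>d 1, \<dots>, d (N - 1)\<close>, translated so that its sum is \<open>N / 2\<close>.\<close>
definition window_of_increments :: "nat \<Rightarrow> (nat \<Rightarrow> real) \<Rightarrow> nat \<Rightarrow> real" where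
  "window_of_increments N d k = 1 / 2 - (\<Sum>i<N. \<Sum>j = 1..i. d j) / N + (\<Sum>j = 1..k. d j)"

lemma sum_window_of_increments:
  assumes "N \<ge> 1"
  shows "(\<Sum>k<N. window_of_increments N d k) = N / 2"
proof -
  define A where "A = (\<Sum>i<N. \<Sum>j = 1..i. d j)"
  have "(\<Sum>k<N. window_of_increments N d k) = (\<Sum>k<N. (1 / 2 - A / N) + (\<Sum>j = 1..k. d j))"
    by (simp add: window_of_increments_def A_def)
  also have "\<dots> = N * (1 / 2 - A / N) + A"
    by (simp add: sum.distrib A_def)
  also have "\<dots> = N / 2"
    using assms by (simp add: field_simps)
  finally show ?thesis .
qed

lemma window_of_increments_diff:
  assumes "j \<ge> 1"
  shows "window_of_increments N d j - window_of_increments N d (j - 1) = d j"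
  using assms by (cases j) (simp_all add: window_of_increments_def)

lemma angle_window_of_increments:
  assumes "simplex_point N d"
  shows "angle_window N (window_of_increments N d)"
  unfolding angle_window_def
proof
  show "mono_on {..<N} (window_of_increments N d)"
  proof (rule mono_onI)
    fix i j assume "i \<in> {..<N}" "j \<in> {..<N}" "i \<le> j"
    then have "(\<Sum>l = 1..i. d l) \<le> (\<Sum>l = 1..j. d l)"
      using assms unfolding simplex_point_def by (intro sum_mono2) auto
    then show "window_of_increments N d i \<le> window_of_increments N d j"
      by (simp add: window_of_increments_def)
  qed
  show "window_of_increments N d (N - 1) \<le> window_of_increments N d 0 + 1"
    using assms by (simp add: window_of_increments_def simplex_point_def)
qed

lemma sum_diff_telescope:
  fixes w :: "nat \<Rightarrow> 'a::ab_group_add"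
  shows "(\<Sum>j = 1..k. w j - w (j - 1)) = w k - w 0"
  by (induction k) (simp_all add: sum.cl_ivl_Suc)

lemma window_of_increments_eq:
  assumes "N \<ge> 1" "(\<Sum>k<N. w k) = N / 2" "\<forall>j\<in>{1..N - 1}. d j = w j - w (j - 1)" "k < N"
  shows "window_of_increments N d k = w k"
proof -
  have partial: "(\<Sum>j = 1..i. d j) = w i - w 0" if "i < N" for i
  proof -
    have "(\<Sum>j = 1..i. d j) = (\<Sum>j = 1..i. w j - w (j - 1))"
      using assms(3) that by (intro sum.cong) auto
    then show ?thesis
      by (simp only: sum_diff_telescope)
  qed
  then have "(\<Sum>i<N. \<Sum>j = 1..i. d j) = N / 2 - N * w 0"
    using assms(2) by (simp add: sum_subtractf)
  then have "(\<Sum>i<N. \<Sum>j = 1..i. d j) / N = 1 / 2 - w 0"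
    using assms(1) by (simp add: field_simps)
  with partial[OF assms(4)] show ?thesis
    by (simp add: window_of_increments_def)
qed

definition window_poly :: "nat \<Rightarrow> (nat \<Rightarrow> real) \<Rightarrow> complex poly" where
  "window_poly N d = poly_of_roots (root_mset N (window_of_increments N d))"

lemma degree_window_poly [simp]: "degree (window_poly N d) = N"
  by (simp add: window_poly_def)

lemma lead_coeff_window_poly: "lead_coeff (window_poly N d) = 1"
  unfolding window_poly_def by (rule lead_coeff_poly_of_roots)

lemma reflect_window_poly:
  assumes "N \<ge> 1"
  shows "reflect_poly (window_poly N d) = map_poly cnj (window_poly N d)"
proof -
  have "(\<Prod>z\<in>#root_mset N (window_of_increments N d). - z) = 1"
    using assms by (simp add: prod_uminus_root_mset sum_window_of_increments)
  then show ?thesis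
    unfolding window_poly_def
    by (simp add: reflect_poly_of_roots_unimodular unimodular_root_mset)
qed

lemma window_poly_root_unimodular: "poly (window_poly N d) z = 0 \<Longrightarrow> cmod z = 1"
  by (simp add: window_poly_def poly_poly_of_roots_eq_0_iff unimodular_root_mset)

lemma window_poly_cong:
  assumes "\<forall>j\<in>{1..N - 1}. d j = d' j"
  shows "window_poly N d = window_poly N d'"
proof -
  have "(\<Sum>j = 1..i. d j) = (\<Sum>j = 1..i. d' j)" if "i < N" for i
    using assms that by (intro sum.cong) auto
  then have "window_of_increments N d k = window_of_increments N d' k" if "k < N" for k
    using that by (simp add: window_of_increments_def)
  then show ?thesis
    unfolding window_poly_def by (metis root_mset_cong)
qed

lemma window_poly_inj:
  assumes "N \<ge> 1" "simplex_point N d" "simplex_point N d'"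
    and "window_poly N d = window_poly N d'" "j \<in> {1..N - 1}"
  shows "d j = d' j"
proof -
  have "root_mset N (window_of_increments N d) = root_mset N (window_of_increments N d')"
    using assms(4) proots_poly_of_roots unfolding window_poly_def by metis
  then have same: "window_of_increments N d k = window_of_increments N d' k" if "k < N" for k
    using angle_window_unique[OF angle_window_of_increments[OF assms(2)]
        angle_window_of_increments[OF assms(3)]] that assms(1)
    by (simp add: sum_window_of_increments)
  have "j < N" "j - 1 < N" "j \<ge> 1"
    using assms(5) by auto
  then show ?thesis
    using window_of_increments_diff[of j N d] window_of_increments_diff[of j N d'] same by metis
qed

lemma window_poly_surj:
  assumes "N \<ge> 1" "\<forall>z. apoly N a z = 0 \<longrightarrow> cmod z = 1"
  obtains d where "simplex_point N d" "window_poly N d = apoly_poly N a"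
proof -
  define p where "p = apoly_poly N a"
  have p: "degree p = N" "lead_coeff p = 1" "coeff p 0 = 1"
    using assms(1) by (simp_all add: p_def degree_apoly_poly coeff_apoly_poly)
  then have p_eq: "poly_of_roots (proots p) = p"
    by (intro poly_of_roots_proots)
  have "size (proots p) = N"
    using p(1) by (simp add: size_proots_complex)
  moreover have "\<forall>z\<in>#proots p. cmod z = 1"
    using assms(2) p_eq
    by (auto simp: p_def poly_apoly_poly simp flip: poly_poly_of_roots_eq_0_iff)
  moreover have "(\<Prod>z\<in>#proots p. - z) = 1"
    using p(3) p_eq coeff_0_poly_of_roots[of "proots p"] by simp
  ultimately obtain w
    where w: "angle_window N w" "(\<Sum>k<N. w k) = N / 2" "root_mset N w = proots p"
    using angle_window_exists[OF assms(1)] by blast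
  define d where "d j = w j - w (j - 1)" for j
  have "simplex_point N d"
    unfolding simplex_point_def
  proof
    show "\<forall>j\<in>{1..N - 1}. 0 \<le> d j"
      using angle_window_mono[OF w(1)] by (auto simp: d_def)
    show "(\<Sum>j = 1..N - 1. d j) \<le> 1"
      using w(1) unfolding d_def sum_diff_telescope by (simp add: angle_window_def)
  qed
  moreover have "window_poly N d = p"
  proof -
    have "root_mset N (window_of_increments N d) = root_mset N w"
      using assms(1) w(2) by (intro root_mset_cong window_of_increments_eq) (auto simp: d_def)
    with w(3) p_eq show ?thesis
      by (simp add: window_poly_def)
  qed
  ultimately show thesis
    using that p_def by blast
qed

lemma window_poly_eq_if_poly_coords_eq:
  assumes "N \<ge> 1"
    and "\<forall>j\<in>{1..N - 1}. poly_coords N (window_poly N d) j = poly_coords N (window_poly N d') j"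
  shows "window_poly N d = window_poly N d'"
proof -
  have "apoly_poly N (poly_coords N (window_poly N d'')) = window_poly N d''" for d''
    using assms(1) degree_window_poly lead_coeff_window_poly reflect_window_poly[OF assms(1)]
    by (rule apoly_poly_poly_coords)
  then show ?thesis
    using apoly_poly_cong[OF assms(2)] by metis
qed

lemma continuous_on_coeff_window_poly:
  assumes "\<And>j. continuous_on S (\<lambda>x. d x j)"
  shows "continuous_on S (\<lambda>x. coeff (window_poly N (d x)) n)"
  unfolding window_poly_def poly_of_roots_root_mset window_of_increments_def divide_inverse
  by (intro continuous_on_coeff_prod_linear continuous_intros assms) simp

lemma continuous_on_poly_coords_window_poly:
  assumes "\<And>j. continuous_on S (\<lambda>x. d x j)"
  shows "continuous_on S (\<lambda>x. poly_coords N (window_poly N (d x)) k)"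
  unfolding poly_coords_def avec_def
  by (cases "2 * k < N"; cases "2 * k = N")
    (simp_all add: continuous_intros continuous_on_coeff_window_poly assms)

lemma std_simplex_cart:
  "convex hull (insert 0 Basis) = {x :: real^'n. (\<forall>i. 0 \<le> x $ i) \<and> (\<Sum>i\<in>UNIV. x $ i) \<le> 1}"
proof -
  have Basis: "(Basis :: (real^'n) set) = range (\<lambda>i. axis i 1)"
    by (auto simp: Basis_vec_def)
  have "sum ((\<bullet>) x) Basis = (\<Sum>i\<in>UNIV. x $ i)" for x :: "real^'n"
    unfolding Basis by (subst sum.reindex) (auto simp: inj_on_def axis_eq_axis inner_axis)
  then show ?thesis
    unfolding std_simplex by (auto simp: Basis inner_axis)
qed

lemma std_simplex_homeomorphic_cball:
  "convex hull (insert 0 (Basis :: 'a set)) homeomorphic cball (0 :: 'a::euclidean_space) 1"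
proof (rule homeomorphic_convex_compact_cball)
  show "compact (convex hull (insert 0 (Basis :: 'a set)))"
    by (simp add: compact_convex_hull finite_imp_compact)
  show "interior (convex hull (insert 0 (Basis :: 'a set))) \<noteq> {}"
    using interior_std_simplex_nonempty by blast
qed simp_all

lemma vec_lambda_inv_into_nth:
  assumes "inj_on e A" "j \<in> A"
  shows "(\<chi> i. f (inv_into A e i)) $ e j = f j"
  using assms by (simp add: inv_into_f_f)

lemma all_iff_bij_betw:
  assumes "bij_betw e A UNIV"
  shows "(\<forall>i. P i) \<longleftrightarrow> (\<forall>j\<in>A. P (e j))"
  using assms unfolding bij_betw_def by (metis UNIV_I imageE)

lemma vec_eq_iff_bij_betw:
  assumes "bij_betw e A (UNIV :: 'n::finite set)"
  shows "x = y \<longleftrightarrow> (\<forall>j\<in>A. x $ e j = y $ e j)"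
  unfolding vec_eq_iff all_iff_bij_betw[OF assms] ..

lemma sum_vec_bij_betw:
  assumes "bij_betw e A (UNIV :: 'n::finite set)"
  shows "(\<Sum>i\<in>UNIV. x $ i) = (\<Sum>j\<in>A. x $ e j)"
  using sum.reindex_bij_betw[OF assms, of "\<lambda>i. x $ i"] by simp

lemma mem_std_simplex_iff_simplex_point:
  assumes "bij_betw e {1..N - 1} (UNIV :: 'n::finite set)"
  shows "x \<in> convex hull (insert 0 Basis) \<longleftrightarrow> simplex_point N (\<lambda>j. (x :: real^'n) $ e j)"
  unfolding std_simplex_cart simplex_point_def sum_vec_bij_betw[OF assms]
    all_iff_bij_betw[OF assms]
  by simp

definition W_param :: "nat \<Rightarrow> (nat \<Rightarrow> 'n::finite) \<Rightarrow> real^'n \<Rightarrow> real^'n" where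
  "W_param N e g = (\<chi> i. poly_coords N (window_poly N (\<lambda>j. g $ e j)) (inv_into {1..N - 1} e i))"

lemma W_param_nth:
  assumes "bij_betw e {1..N - 1} UNIV" "j \<in> {1..N - 1}"
  shows "W_param N e g $ e j = poly_coords N (window_poly N (\<lambda>j. g $ e j)) j"
  using assms unfolding W_param_def bij_betw_def by (intro vec_lambda_inv_into_nth) auto

lemma continuous_on_W_param: "continuous_on S (W_param N e)"
  unfolding W_param_def
  by (intro continuous_on_vec_lambda continuous_on_poly_coords_window_poly continuous_intros)

lemma W_param_image:
  fixes e :: "nat \<Rightarrow> 'n::finite"
  assumes "N \<ge> 1" and e: "bij_betw e {1..N - 1} UNIV"
  shows "W_param N e ` (convex hull (insert 0 Basis)) = W N e"
proof
  show "W_param N e ` (convex hull (insert 0 Basis)) \<subseteq> W N e"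
  proof clarify
    fix g :: "real^'n"
    define d where "d = (\<lambda>j. g $ e j)"
    have "apoly_poly N (\<lambda>j. W_param N e g $ e j) = apoly_poly N (poly_coords N (window_poly N d))"
      using e by (intro apoly_poly_cong) (simp add: W_param_nth d_def)
    also have "\<dots> = window_poly N d"
      using assms(1) degree_window_poly lead_coeff_window_poly reflect_window_poly[OF assms(1)]
      by (rule apoly_poly_poly_coords)
    finally have "apoly N (\<lambda>j. W_param N e g $ e j) = poly (window_poly N d)"
      by (simp flip: poly_apoly_poly)
    then show "W_param N e g \<in> W N e"
      unfolding W_def using window_poly_root_unimodular by auto
  qed
  show "W N e \<subseteq> W_param N e ` (convex hull (insert 0 Basis))"
  proof
    fix x assume "x \<in> W N e"
    then obtain d where d: "simplex_point N d" "window_poly N d = apoly_poly N (\<lambda>j. x $ e j)"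
      using window_poly_surj[OF assms(1)] unfolding W_def by blast
    define g :: "real^'n" where "g = (\<chi> i. d (inv_into {1..N - 1} e i))"
    have gd: "\<forall>j\<in>{1..N - 1}. g $ e j = d j"
      using e unfolding g_def bij_betw_def by (simp add: vec_lambda_inv_into_nth)
    moreover have "(\<Sum>j = 1..N - 1. g $ e j) = (\<Sum>j = 1..N - 1. d j)"
      using gd by (intro sum.cong) auto
    ultimately have "simplex_point N (\<lambda>j. g $ e j)"
      using d(1) by (simp add: simplex_point_def)
    then have "g \<in> convex hull (insert 0 Basis)"
      using mem_std_simplex_iff_simplex_point[OF e] by blast
    moreover have "W_param N e g = x"
      unfolding vec_eq_iff_bij_betw[OF e]
    proof
      fix j assume j: "j \<in> {1..N - 1}"
      have "W_param N e g $ e j = poly_coords N (window_poly N d) j"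
        using W_param_nth[OF e j] window_poly_cong[OF gd] by simp
      also have "\<dots> = x $ e j"
        using assms(1) j by (simp add: d(2) poly_coords_apoly_poly)
      finally show "W_param N e g $ e j = x $ e j" .
    qed
    ultimately show "x \<in> W_param N e ` (convex hull (insert 0 Basis))"
      by blast
  qed
qed

lemma inj_on_W_param:
  fixes e :: "nat \<Rightarrow> 'n::finite"
  assumes "N \<ge> 1" and e: "bij_betw e {1..N - 1} UNIV"
  shows "inj_on (W_param N e) (convex hull (insert 0 Basis))"
proof (rule inj_onI)
  fix g g' :: "real^'n"
  assume "g \<in> convex hull (insert 0 Basis)" "g' \<in> convex hull (insert 0 Basis)"
    and eq: "W_param N e g = W_param N e g'"
  then have simplex: "simplex_point N (\<lambda>j. g $ e j)" "simplex_point N (\<lambda>j. g' $ e j)"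
    by (simp_all add: mem_std_simplex_iff_simplex_point[OF e])
  have "poly_coords N (window_poly N (\<lambda>j. g $ e j)) j =
      poly_coords N (window_poly N (\<lambda>j. g' $ e j)) j" if "j \<in> {1..N - 1}" for j
    using W_param_nth[OF e that, of g] W_param_nth[OF e that, of g'] eq by simp
  then have "window_poly N (\<lambda>j. g $ e j) = window_poly N (\<lambda>j. g' $ e j)"
    using assms(1) window_poly_eq_if_poly_coords_eq by blast
  then have "\<forall>j\<in>{1..N - 1}. g $ e j = g' $ e j"
    using window_poly_inj[OF assms(1) simplex] by blast
  then show "g = g'"
    using vec_eq_iff_bij_betw[OF e] by blast
qed

theorem theorem1:
  fixes N :: nat and e :: "nat \<Rightarrow> 'n::finite"
  assumes "N \<ge> 2"
    and "bij_betw e {1..N - 1} (UNIV :: 'n set)"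
  shows "W N e homeomorphic cball (0 :: real ^ 'n) 1"
proof -
  let ?S = "convex hull (insert 0 Basis) :: (real^'n) set"
  have N: "N \<ge> 1"
    using assms(1) by simp
  have "compact ?S"
    by (simp add: compact_convex_hull finite_imp_compact)
  moreover have "continuous_on ?S (W_param N e)"
    by (rule continuous_on_W_param)
  ultimately have "?S homeomorphic W N e"
    using W_param_image[OF N assms(2)] inj_on_W_param[OF N assms(2)] by (rule homeomorphic_compact)
  then have "W N e homeomorphic ?S"
    by (rule homeomorphic_sym[THEN iffD1])
  then show ?thesis
    using std_simplex_homeomorphic_cball by (rule homeomorphic_trans)
qed

end
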